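(* Let $\mathfrak E=(\mathfrak e_1,\dots,\mathfrak e_n)$ be an admissible sequence of virtual extended $\mathbb Z$-segments such that $\mathrm{Supp}(\mathfrak e_1)\supseteq\mathrm{Supp}(\mathfrak e_2)\supseteq\cdots\supseteq\mathrm{Supp}(\mathfrak e_n)$. Then $\mathrm{NV}(\mathfrak E)\ne0$ if and only if $\widetilde{\mathrm{NV}}(\mathfrak E)\ne0$.
   Context: A $\mathbb Z$-segment is $[A,B]=\{A,\dots,B\}$ ($A\ge B$ integers), length $b=A-B+1$. A virtual extended $\mathbb Z$-segment is $([A,B],l,\eta)$, $l\in\mathbb Z$, $l\le b/2$, $\eta\in\{\pm1\}$ with $\eta\sim-\eta$ iff $b=2l$; extended if $l\ge0$; $\mathrm{Supp}=[A,B]$. A sequence with supports $[A_i,B_i]$ is admissible if $A_i<A_j$ and $B_i<B_j$ imply $i<j$. Pairwise non-vanishing: for admissible $(\mathfrak e_1,\mathfrak e_2)$, $\mathfrak e_i=([A_i,B_i],l_i,\eta_i)$, $b_i=A_i-B_i+1$, $\epsilon=(-1)^{A_1-B_1}\eta_1\eta_2$, $\mathrm{NV}(\mathfrak e_1,\mathfrak e_2)\ne0$ iff both are extended and all applicable conditions hold: (a) if $A_1\le A_2$, $B_1\le B_2$: $\epsilon=1\Rightarrow B_1+l_1\le B_2+l_2,\ A_1-l_1\le A_2-l_2$; $\epsilon=-1\Rightarrow A_1-l_1<B_2+l_2$; (b) if $A_1\le A_2$, $B_1\ge B_2$: $\epsilon=1\Rightarrow0\le l_2-l_1\le b_2-b_1$;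 $\epsilon=-1\Rightarrow l_1+l_2\ge b_1$; (c) if $A_1\ge A_2$, $B_1\le B_2$: $\epsilon=1\Rightarrow0\le l_1-l_2\le b_1-b_2$; $\epsilon=-1\Rightarrow l_1+l_2\ge b_2$. Row exchange $R(\mathfrak e_1,\mathfrak e_2)=(\mathfrak e_2',\mathfrak e_1')$ for nested supports, $\mathfrak e_i'=([A_i,B_i],l_i',\eta_i')$: Case 1, $[A_1,B_1]\subseteq[A_2,B_2]$: $(l_1',\eta_1')=(l_1,(-1)^{A_2-B_2}\eta_1)$; if $\epsilon=1$ and $b_2-2l_2<2(b_1-2l_1)$, $(l_2',\eta_2')=(b_2-l_2-(b_1-2l_1),(-1)^{A_1-B_1}\eta_2)$; if $\epsilon=1$ and $b_2-2l_2\ge2(b_1-2l_1)$, $(l_2',\eta_2')=(l_2+b_1-2l_1,(-1)^{A_1-B_1+1}\eta_2)$; if $\epsilon=-1$, $(l_2',\eta_2')=(l_2-(b_1-2l_1),(-1)^{A_1-B_1+1}\eta_2)$. Case 2, $[A_1,B_1]\supsetneq[A_2,B_2]$: $(l_2',\eta_2')=(l_2,(-1)^{A_1-B_1}\eta_2)$; if $\epsilon=1$ and $b_1-2l_1<2(b_2-2l_2)$, $(l_1',\eta_1')=(b_1-l_1-(b_2-2l_2),(-1)^{A_2-B_2}\eta_1)$; if $\epsilon=1$ and $b_1-2l_1\ge2(b_2-2l_2)$, $(l_1',\eta_1')=(l_1+b_2-2l_2,(-1)^{A_2-B_2+1}\eta_1)$; if $\epsilon=-1$, $(l_1',\eta_1')=(l_1-(b_2-2l_2),(-1)^{A_2-B_2+1}\eta_1)$.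 $R_k(\mathfrak E)$ replaces consecutive entries $(\mathfrak e_k,\mathfrak e_{k+1})$ with nested supports by $R(\mathfrak e_k,\mathfrak e_{k+1})$; $[\mathfrak E]$ is the set of sequences obtained from $\mathfrak E$ by finitely many $R_k$. $\widetilde{\mathrm{NV}}(\mathfrak E)\ne0$ means $\mathrm{NV}(\mathfrak e_i,\mathfrak e_{i+1})\ne0$ for all $1\le i\le n-1$; $\mathrm{NV}(\mathfrak E)\ne0$ means $\widetilde{\mathrm{NV}}(\mathfrak E')\ne0$ for all $\mathfrak E'\in[\mathfrak E]$. *)

theory Defs
  imports Main
begin

datatype vseg = VSeg (segA: int) (segB: int) (segl: int) (segeta: int)

definition seglen :: "vseg \<Rightarrow> int" where
  "seglen e = segA e - segB e + 1"

definition valid_vseg :: "vseg \<Rightarrow> bool" where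
  "valid_vseg e \<longleftrightarrow> segB e \<le> segA e \<and> 2 * segl e \<le> seglen e \<and> segeta e \<in> {1, -1}"

definition extended :: "vseg \<Rightarrow> bool" where
  "extended e \<longleftrightarrow> 0 \<le> segl e"

definition Supp :: "vseg \<Rightarrow> int set" where
  "Supp e = {segB e .. segA e}"

definition sgnpow :: "int \<Rightarrow> int" where
  "sgnpow k = (if even k then 1 else -1)"

definition admissible :: "vseg list \<Rightarrow> bool" where
  "admissible E \<longleftrightarrow> (\<forall>i<length E. \<forall>j<length E.
      segA (E!i) < segA (E!j) \<and> segB (E!i) < segB (E!j) \<longrightarrow> i < j)"

definition epsilon :: "vseg \<Rightarrow> vseg \<Rightarrow> int" where
  "epsilon e1 e2 = sgnpow (segA e1 - segB e1) * segeta e1 * segeta e2"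

text \<open>Pairwise non-vanishing NV(e1,e2) \<noteq> 0.\<close>
definition NV_pair :: "vseg \<Rightarrow> vseg \<Rightarrow> bool" where
  "NV_pair e1 e2 \<longleftrightarrow>
    (let A1 = segA e1; B1 = segB e1; l1 = segl e1; b1 = seglen e1;
         A2 = segA e2; B2 = segB e2; l2 = segl e2; b2 = seglen e2;
         \<epsilon> = epsilon e1 e2 in
     extended e1 \<and> extended e2 \<and>
     (A1 \<le> A2 \<and> B1 \<le> B2 \<longrightarrow>
        (\<epsilon> = 1 \<longrightarrow> B1 + l1 \<le> B2 + l2 \<and> A1 - l1 \<le> A2 - l2) \<and>
        (\<epsilon> = -1 \<longrightarrow> A1 - l1 < B2 + l2)) \<and>
     (A1 \<le> A2 \<and> B1 \<ge> B2 \<longrightarrow>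
        (\<epsilon> = 1 \<longrightarrow> 0 \<le> l2 - l1 \<and> l2 - l1 \<le> b2 - b1) \<and>
        (\<epsilon> = -1 \<longrightarrow> l1 + l2 \<ge> b1)) \<and>
     (A1 \<ge> A2 \<and> B1 \<le> B2 \<longrightarrow>
        (\<epsilon> = 1 \<longrightarrow> 0 \<le> l1 - l2 \<and> l1 - l2 \<le> b1 - b2) \<and>
        (\<epsilon> = -1 \<longrightarrow> l1 + l2 \<ge> b2)))"

definition nested :: "vseg \<Rightarrow> vseg \<Rightarrow> bool" where
  "nested e1 e2 \<longleftrightarrow> Supp e1 \<subseteq> Supp e2 \<or> Supp e2 \<subseteq> Supp e1"

definition row_exchange :: "vseg \<Rightarrow> vseg \<Rightarrow> vseg \<times> vseg" where
  "row_exchange e1 e2 =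
    (let A1 = segA e1; B1 = segB e1; l1 = segl e1; b1 = seglen e1; n1 = segeta e1;
         A2 = segA e2; B2 = segB e2; l2 = segl e2; b2 = seglen e2; n2 = segeta e2;
         \<epsilon> = epsilon e1 e2 in
     if Supp e1 \<subseteq> Supp e2 then
       (let (l1', n1') = (l1, sgnpow (A2 - B2) * n1);
            (l2', n2') =
              (if \<epsilon> = 1 then
                 (if b2 - 2*l2 < 2*(b1 - 2*l1)
                  then (b2 - l2 - (b1 - 2*l1), sgnpow (A1 - B1) * n2)
                  else (l2 + b1 - 2*l1, sgnpow (A1 - B1 + 1) * n2))
               else (l2 - (b1 - 2*l1), sgnpow (A1 - B1 + 1) * n2))
        in (VSeg A2 B2 l2' n2', VSeg A1 B1 l1' n1'))
     else
       (let (l2', n2') = (l2, sgnpow (A1 - B1) * n2);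
            (l1', n1') =
              (if \<epsilon> = 1 then
                 (if b1 - 2*l1 < 2*(b2 - 2*l2)
                  then (b1 - l1 - (b2 - 2*l2), sgnpow (A2 - B2) * n1)
                  else (l1 + b2 - 2*l2, sgnpow (A2 - B2 + 1) * n1))
               else (l1 - (b2 - 2*l2), sgnpow (A2 - B2 + 1) * n1))
        in (VSeg A2 B2 l2' n2', VSeg A1 B1 l1' n1')))"

definition R_step :: "vseg list \<Rightarrow> vseg list \<Rightarrow> bool" where
  "R_step E E' \<longleftrightarrow> (\<exists>k. Suc k < length E \<and> nested (E!k) (E!Suc k) \<and>
      E' = E[k := fst (row_exchange (E!k) (E!Suc k)),
             Suc k := snd (row_exchange (E!k) (E!Suc k))])"

definition eqclass :: "vseg list \<Rightarrow> vseg list set" where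
  "eqclass E = {E'. R_step\<^sup>*\<^sup>* E E'}"

definition NVt :: "vseg list \<Rightarrow> bool" where
  "NVt E \<longleftrightarrow> (\<forall>i. Suc i < length E \<longrightarrow> NV_pair (E!i) (E!Suc i))"

definition NV :: "vseg list \<Rightarrow> bool" where
  "NV E \<longleftrightarrow> (\<forall>E'\<in>eqclass E. NVt E')"

end

theory Submission
  imports Defs "HOL-Library.Product_Lexorder" "HOL-Library.Multiset"
begin

(* Give a segment e = ([A,B],l,eta) the charge u(e) = eta (b - 2l). For nested supports,
   NV(e1,e2) /= 0 says |u(e1)| <= b1, |u(e2)| <= b2 and |u(e2) - s(e1) u(e1)| <= |b1 - b2|,
   where s(e) = (-1)^(A-B). Multiply the charge of each entry by the signs s of the entries before
   it: then a row exchange keeps the normalized charge of the inner segment and reflects that of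
   the outer segment through it. Starting from E with decreasing supports and NVt(E) /= 0, the
   normalized charge C of E is a function of the support which is 1-Lipschitz in the length and
   bounded by the length. By induction along the row exchanges, the normalized charge of an entry
   of any E' in [E] is C of its support reflected successively through the values of C on the
   supports of the preceding entries that lie strictly inside it, from the outermost to the
   innermost. Such a chain of reflections moves C by no more than the lengths allow, and this
   gives NVt(E') /= 0. *)

lemma sgnpow_cases: "sgnpow k = 1 \<or> sgnpow k = -1"
  by (simp add: sgnpow_def)

lemma sgnpow_add1: "sgnpow (k + 1) = - sgnpow k"
  by (simp add: sgnpow_def)

subsection \<open>Charges\<close>

definition charge :: "vseg \<Rightarrow> int" where
  "charge e = segeta e * (seglen e - 2 * segl e)"

definition parity_sign :: "vseg \<Rightarrow> int" where
  "parity_sign e = sgnpow (segA e - segB e)"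

definition sign_prod :: "vseg list \<Rightarrow> int" where
  "sign_prod xs = prod_list (map parity_sign xs)"

definition normalized_charge :: "vseg list \<Rightarrow> vseg \<Rightarrow> int" where
  "normalized_charge xs e = charge e * sign_prod xs"

lemma parity_sign_cases: "parity_sign e = 1 \<or> parity_sign e = -1"
  by (simp add: parity_sign_def sgnpow_cases)

lemma sign_prod_cases: "sign_prod xs = 1 \<or> sign_prod xs = -1"
proof (induction xs)
  case (Cons x xs)
  then show ?case using parity_sign_cases[of x] by (auto simp: sign_prod_def)
qed (simp add: sign_prod_def)

lemma sign_prod_append [simp]: "sign_prod (xs @ ys) = sign_prod xs * sign_prod ys"
  and sign_prod_Cons [simp]: "sign_prod (x # xs) = parity_sign x * sign_prod xs"
  and sign_prod_Nil [simp]: "sign_prod [] = 1"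
  by (simp_all add: sign_prod_def)

lemma abs_normalized_charge: "\<bar>normalized_charge xs e\<bar> = \<bar>charge e\<bar>"
  using sign_prod_cases[of xs] by (auto simp: normalized_charge_def)

lemma normalized_charge_snoc_diff:
  "\<bar>normalized_charge (xs @ [a]) b - normalized_charge xs a\<bar> =
    \<bar>charge b - parity_sign a * charge a\<bar>"
  using sign_prod_cases[of xs] parity_sign_cases[of a]
  by (auto simp: normalized_charge_def algebra_simps)

lemma extended_iff_charge: "valid_vseg e \<Longrightarrow> extended e \<longleftrightarrow> \<bar>charge e\<bar> \<le> seglen e"
  by (auto simp: valid_vseg_def extended_def charge_def seglen_def)

lemma NV_pair_iff_charge:
  assumes "valid_vseg a" "valid_vseg b" "nested a b"
  shows "NV_pair a b \<longleftrightarrow> extended a \<and> extended b \<and>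
    \<bar>charge b - parity_sign a * charge a\<bar> \<le> \<bar>seglen a - seglen b\<bar>"
proof -
  obtain A1 B1 l1 n1 where a: "a = VSeg A1 B1 l1 n1" by (cases a)
  obtain A2 B2 l2 n2 where b: "b = VSeg A2 B2 l2 n2" by (cases b)
  have "B1 \<le> A1" "B2 \<le> A2" "2 * l1 \<le> A1 - B1 + 1" "2 * l2 \<le> A2 - B2 + 1"
    "n1 = 1 \<or> n1 = -1" "n2 = 1 \<or> n2 = -1"
    "(B2 \<le> B1 \<and> A1 \<le> A2) \<or> (B1 \<le> B2 \<and> A2 \<le> A1)"
    using assms unfolding a b valid_vseg_def seglen_def nested_def Supp_def by auto
  with sgnpow_cases[of "A1 - B1"] show ?thesis
    unfolding a b NV_pair_def Let_def extended_def epsilon_def charge_def parity_sign_def seglen_def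
    by (elim disjE; simp; arith)
qed

subsection \<open>Row exchange\<close>

lemma row_exchange_swaps_supports:
  "segA (fst (row_exchange a b)) = segA b" "segB (fst (row_exchange a b)) = segB b"
  "segA (snd (row_exchange a b)) = segA a" "segB (snd (row_exchange a b)) = segB a"
  by (simp_all add: row_exchange_def Let_def split: prod.splits)

lemma valid_row_exchange:
  assumes "valid_vseg a" "valid_vseg b"
  shows "valid_vseg (fst (row_exchange a b))" "valid_vseg (snd (row_exchange a b))"
  using assms sgnpow_cases[of "segA a - segB a"] sgnpow_cases[of "segA b - segB b"]
    sgnpow_add1[of "segA a - segB a"] sgnpow_add1[of "segA b - segB b"]
  by (auto simp: row_exchange_def valid_vseg_def seglen_def Let_def split: if_splits)

lemma charge_row_exchange_subset:
  assumes "valid_vseg a" "valid_vseg b" "Supp a \<subseteq> Supp b"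
  shows "charge (fst (row_exchange a b)) = 2 * charge a - parity_sign a * charge b"
    and "charge (snd (row_exchange a b)) = parity_sign b * charge a"
  using sgnpow_cases[of "segA a - segB a"] sgnpow_add1[of "segA a - segB a"]
    sgnpow_cases[of "segA b - segB b"] sgnpow_add1[of "segA b - segB b"]
  by (elim disjE; use assms in \<open>auto simp: row_exchange_def valid_vseg_def seglen_def
      charge_def parity_sign_def epsilon_def Let_def algebra_simps split: if_splits\<close>)+

lemma charge_row_exchange_supset:
  assumes "valid_vseg a" "valid_vseg b" "\<not> Supp a \<subseteq> Supp b"
  shows "charge (fst (row_exchange a b)) = parity_sign a * charge b"
    and "charge (snd (row_exchange a b)) =
      2 * parity_sign a * parity_sign b * charge b - parity_sign b * charge a"
  using sgnpow_cases[of "segA a - segB a"] sgnpow_add1[of "segA a - segB a"]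
    sgnpow_cases[of "segA b - segB b"] sgnpow_add1[of "segA b - segB b"]
  by (elim disjE; use assms in \<open>auto simp: row_exchange_def valid_vseg_def seglen_def
      charge_def parity_sign_def epsilon_def Let_def algebra_simps split: if_splits\<close>)+

lemma parity_sign_row_exchange:
  "parity_sign (fst (row_exchange a b)) = parity_sign b"
  "parity_sign (snd (row_exchange a b)) = parity_sign a"
  unfolding parity_sign_def row_exchange_swaps_supports by simp_all

lemma normalized_charge_row_exchange_subset:
  assumes "valid_vseg a" "valid_vseg b" "Supp a \<subseteq> Supp b"
  shows "normalized_charge xs (fst (row_exchange a b)) =
      2 * normalized_charge xs a - normalized_charge (xs @ [a]) b"
    and "normalized_charge (xs @ [fst (row_exchange a b)]) (snd (row_exchange a b)) =
      normalized_charge xs a"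
  unfolding normalized_charge_def charge_row_exchange_subset[OF assms] sign_prod_append
  using parity_sign_cases[of b] by (auto simp: parity_sign_row_exchange algebra_simps)

lemma normalized_charge_row_exchange_supset:
  assumes "valid_vseg a" "valid_vseg b" "\<not> Supp a \<subseteq> Supp b"
  shows "normalized_charge xs (fst (row_exchange a b)) = normalized_charge (xs @ [a]) b"
    and "normalized_charge (xs @ [fst (row_exchange a b)]) (snd (row_exchange a b)) =
      2 * normalized_charge (xs @ [a]) b - normalized_charge xs a"
  unfolding normalized_charge_def charge_row_exchange_supset[OF assms] sign_prod_append
  using parity_sign_cases[of b] by (auto simp: parity_sign_row_exchange algebra_simps)

lemma R_step_split:
  assumes "R_step F F'"
  obtains xs a b ys where "F = xs @ a # b # ys"
    and "F' = xs @ fst (row_exchange a b) # snd (row_exchange a b) # ys"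
proof -
  obtain k where k: "Suc k < length F"
    "F' = F[k := fst (row_exchange (F ! k) (F ! Suc k)),
            Suc k := snd (row_exchange (F ! k) (F ! Suc k))]"
    using assms unfolding R_step_def by blast
  have "F = take k F @ F ! k # F ! Suc k # drop (Suc (Suc k)) F" "length (take k F) = k"
    using k(1) by (simp_all add: Cons_nth_drop_Suc)
  then obtain xs a b ys where F: "F = xs @ a # b # ys" "length xs = k"
    by blast
  then have "F' = xs @ fst (row_exchange a b) # snd (row_exchange a b) # ys"
    using k(2) by (simp add: list_update_append nth_append)
  with F(1) show ?thesis by (rule that)
qed

lemma R_step_length: "R_step F F' \<Longrightarrow> length F' = length F"
  by (auto simp: R_step_def)

lemma rtranclp_R_step_length: "R_step\<^sup>*\<^sup>* F F' \<Longrightarrow> length F' = length F"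
  by (induction rule: rtranclp_induct) (auto dest: R_step_length)

subsection \<open>Keys of supports\<close>

text \<open>On a chain of supports the lexicographic
  order of keys is reverse inclusion, so sorting a list of such keys lists the supports from the
  outermost to the innermost.\<close>

type_synonym interval_key = "int \<times> int"

definition key :: "vseg \<Rightarrow> interval_key" where
  "key e = (- segA e, segB e)"

definition inside :: "interval_key \<Rightarrow> interval_key \<Rightarrow> bool" where
  "inside k k' \<longleftrightarrow> fst k' \<le> fst k \<and> snd k' \<le> snd k"

definition strictly_inside :: "interval_key \<Rightarrow> interval_key \<Rightarrow> bool" where
  "strictly_inside k k' \<longleftrightarrow> inside k k' \<and> k \<noteq> k'"

definition key_len :: "interval_key \<Rightarrow> int" where
  "key_len k = - fst k - snd k + 1"

lemma inside_refl [simp]: "inside k k"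
  by (simp add: inside_def)

lemma inside_trans: "inside k k' \<Longrightarrow> inside k' k'' \<Longrightarrow> inside k k''"
  by (auto simp: inside_def)

lemma inside_antisym: "inside k k' \<Longrightarrow> inside k' k \<Longrightarrow> k = k'"
  by (auto simp: inside_def prod_eq_iff)

lemma strictly_inside_asym: "strictly_inside k k' \<Longrightarrow> \<not> inside k' k"
  by (auto simp: strictly_inside_def dest: inside_antisym)

lemma key_len_mono: "inside k k' \<Longrightarrow> key_len k \<le> key_len k'"
  by (auto simp: inside_def key_len_def)

lemma key_len_key [simp]: "key_len (key e) = seglen e"
  by (simp add: key_len_def key_def seglen_def)

lemma Supp_subset_iff_inside: "valid_vseg a \<Longrightarrow> Supp a \<subseteq> Supp b \<longleftrightarrow> inside (key a) (key b)"
  by (auto simp: Supp_def valid_vseg_def inside_def key_def)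

lemma key_row_exchange:
  "key (fst (row_exchange a b)) = key b" "key (snd (row_exchange a b)) = key a"
  unfolding key_def row_exchange_swaps_supports by simp_all

subsection \<open>Chains of reflections\<close>

definition reflect_chain :: "('a \<Rightarrow> int) \<Rightarrow> 'a list \<Rightarrow> int \<Rightarrow> int" where
  "reflect_chain c L z = fold (\<lambda>k z. 2 * c k - z) L z"

lemma reflect_chain_Nil [simp]: "reflect_chain c [] z = z"
  and reflect_chain_Cons [simp]: "reflect_chain c (k # L) z = reflect_chain c L (2 * c k - z)"
  and reflect_chain_append [simp]:
    "reflect_chain c (L @ L') z = reflect_chain c L' (reflect_chain c L z)"
  by (simp_all add: reflect_chain_def)

lemma reflect_chain_affine:
  obtains s t where "s = 1 \<or> s = -1" "\<And>z. reflect_chain c L z = s * z + t"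
proof (induction L arbitrary: thesis)
  case Nil
  then show ?case by (metis mult_1 add_0_right reflect_chain_Nil)
next
  case (Cons k L)
  obtain s t where "s = 1 \<or> s = -1" "\<And>z. reflect_chain c L z = s * z + t"
    using Cons.IH by blast
  then show ?case
    by (intro Cons.prems[of "- s" "2 * s * c k + t"]) (auto simp: algebra_simps)
qed

lemma reflect_chain_dist: "\<bar>reflect_chain c L z - reflect_chain c L z'\<bar> = \<bar>z - z'\<bar>"
proof -
  obtain s t where "s = 1 \<or> s = -1" "\<And>z. reflect_chain c L z = s * z + t"
    using reflect_chain_affine by metis
  then show ?thesis by (auto simp: algebra_simps)
qed

lemma reflect_chain_reflect:
  "reflect_chain c L (2 * z - z') = 2 * reflect_chain c L z - reflect_chain c L z'"
proof -
  obtain s t where "s = 1 \<or> s = -1" "\<And>z. reflect_chain c L z = s * z + t"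
    using reflect_chain_affine by metis
  then show ?thesis by (auto simp: algebra_simps)
qed

lemma sorted_eq_filter_append:
  fixes L :: "'a :: linorder list"
  assumes "sorted L"
  shows "L = filter (\<lambda>k. k \<le> x) L @ filter (\<lambda>k. x < k) L"
proof -
  have "sort L = filter (\<lambda>k. k \<le> x) L @ filter (\<lambda>k. x < k) L"
    using assms by (intro properties_for_sort)
      (auto simp: sorted_append sorted_wrt_filter linorder_not_less)
  with assms show ?thesis by (simp add: sorted_sort_id)
qed

lemma insort_eq_filter:
  fixes L :: "'a :: linorder list"
  assumes "sorted L"
  shows "insort x L = filter (\<lambda>k. k \<le> x) L @ x # filter (\<lambda>k. x < k) L"
proof -
  have "sort (x # L) = filter (\<lambda>k. k \<le> x) L @ x # filter (\<lambda>k. x < k) L"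
    using assms by (intro properties_for_sort)
      (auto simp: sorted_append sorted_wrt_filter linorder_not_less)
  with assms show ?thesis by (simp add: sorted_sort_id)
qed

definition inner_keys :: "interval_key list \<Rightarrow> interval_key \<Rightarrow> interval_key list" where
  "inner_keys ks k = sort (filter (\<lambda>k'. strictly_inside k' k) ks)"

definition reflected_charge ::
    "(interval_key \<Rightarrow> int) \<Rightarrow> interval_key list \<Rightarrow> interval_key \<Rightarrow> int" where
  "reflected_charge C ks k = reflect_chain C (inner_keys ks k) (C k)"

lemma inner_keys_snoc_outside:
  "\<not> strictly_inside x k \<Longrightarrow> inner_keys (ks @ [x]) k = inner_keys ks k"
  by (simp add: inner_keys_def)

lemma inner_keys_snoc_inside:
  "strictly_inside x k \<Longrightarrow> inner_keys (ks @ [x]) k = insort x (inner_keys ks k)"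
  unfolding inner_keys_def by (simp, rule properties_for_sort) (simp_all add: sorted_insort)

lemma inner_keys_perm: "mset ks = mset ks' \<Longrightarrow> inner_keys ks k = inner_keys ks' k"
  unfolding inner_keys_def by (metis mset_filter sorted_list_of_multiset_mset)

lemma reflected_charge_snoc_outside:
  "\<not> strictly_inside x k \<Longrightarrow> reflected_charge C (ks @ [x]) k = reflected_charge C ks k"
  by (simp add: reflected_charge_def inner_keys_snoc_outside)

subsection \<open>The reflection invariant\<close>

text \<open>K will be the set of keys of the supports of the initial sequence, and C its normalized
  charge as a function of the support.\<close>

locale key_chain =
  fixes K :: "interval_key set" and C :: "interval_key \<Rightarrow> int"
  assumes chain: "k \<in> K \<Longrightarrow> k' \<in> K \<Longrightarrow> inside k k' \<or> inside k' k"
    and lipschitz: "k \<in> K \<Longrightarrow> k' \<in> K \<Longrightarrow> inside k' k \<Longrightarrow>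
      \<bar>C k - C k'\<bar> \<le> key_len k - key_len k'"
    and bounded: "k \<in> K \<Longrightarrow> \<bar>C k\<bar> \<le> key_len k"
begin

lemma inside_iff_le: "k \<in> K \<Longrightarrow> k' \<in> K \<Longrightarrow> inside k k' \<longleftrightarrow> k' \<le> k"
  using chain[of k k'] by (cases k; cases k') (auto simp: inside_def)

lemma strictly_inside_iff_less: "k \<in> K \<Longrightarrow> k' \<in> K \<Longrightarrow> strictly_inside k k' \<longleftrightarrow> k' < k"
  by (auto simp: strictly_inside_def inside_iff_le)

lemma reflect_chain_dist_le:
  assumes "set S \<subseteq> K" "sorted S" "x \<in> K" "\<forall>s\<in>set S. inside s x"
    and "t \<in> K" "inside t x" "\<forall>s\<in>set S. inside t s"
  shows "\<bar>reflect_chain C S (C x) - C t\<bar> \<le> key_len x - key_len t"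
  using assms
proof (induction S arbitrary: t rule: rev_induct)
  case Nil
  then show ?case by (simp add: lipschitz)
next
  case (snoc s S)
  have "s \<in> K" "inside s x" "inside t s" using snoc.prems by auto
  moreover have "\<forall>s'\<in>set S. inside s s'"
    using snoc.prems(1,2) \<open>s \<in> K\<close> by (auto simp: sorted_append inside_iff_le)
  ultimately have "\<bar>reflect_chain C S (C x) - C s\<bar> \<le> key_len x - key_len s"
    using snoc by (auto simp: sorted_append)
  moreover have "\<bar>C s - C t\<bar> \<le> key_len s - key_len t"
    using lipschitz \<open>s \<in> K\<close> \<open>inside t s\<close> snoc.prems(5) by blast
  ultimately show ?case by simp
qed

lemma inner_keys_subset: "set ks \<subseteq> K \<Longrightarrow> set (inner_keys ks k) \<subseteq> K"
  by (auto simp: inner_keys_def)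

lemma filter_inner_keys:
  assumes "set ks \<subseteq> K" "x \<in> K" "inside x y"
  shows "filter (\<lambda>k. x < k) (inner_keys ks y) = inner_keys ks x"
proof -
  have "strictly_inside k y \<and> x < k \<longleftrightarrow> strictly_inside k x" if "k \<in> K" for k
    using that assms(2,3) by (auto simp: strictly_inside_iff_less[symmetric] strictly_inside_def
        dest: inside_trans inside_antisym)
  then show ?thesis
    using assms(1) unfolding inner_keys_def filter_sort filter_filter
    by (metis (no_types, lifting) filter_cong subsetD)
qed

lemma reflected_charge_split:
  assumes "set ks \<subseteq> K" "x \<in> K" "inside x y"
  shows "reflected_charge C ks y =
    reflect_chain C (inner_keys ks x)
      (reflect_chain C (filter (\<lambda>k. k \<le> x) (inner_keys ks y)) (C y))"
  unfolding reflected_charge_def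
  by (subst sorted_eq_filter_append[of "inner_keys ks y" x])
    (simp_all add: inner_keys_def filter_inner_keys[OF assms, unfolded inner_keys_def])

lemma outer_reflections_dist_le:
  assumes "set ks \<subseteq> K" "x \<in> K" "y \<in> K" "inside x y"
  shows "\<bar>reflect_chain C (filter (\<lambda>k. k \<le> x) (inner_keys ks y)) (C y) - C x\<bar>
    \<le> key_len y - key_len x"
  using inner_keys_subset[OF assms(1), of y] assms(2-4)
  by (intro reflect_chain_dist_le)
    (auto simp: inner_keys_def sorted_wrt_filter strictly_inside_def inside_iff_le)

lemma reflected_charge_snoc_inside:
  assumes "set ks \<subseteq> K" "x \<in> K" "strictly_inside x y"
  shows "reflected_charge C (ks @ [x]) y = 2 * reflected_charge C ks x - reflected_charge C ks y"
proof -
  have xy: "inside x y" using assms(3) by (simp add: strictly_inside_def)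
  have "reflected_charge C (ks @ [x]) y = reflect_chain C (inner_keys ks x)
      (2 * C x - reflect_chain C (filter (\<lambda>k. k \<le> x) (inner_keys ks y)) (C y))"
    unfolding reflected_charge_def inner_keys_snoc_inside[OF assms(3)]
    by (simp add: insort_eq_filter inner_keys_def
        filter_inner_keys[OF assms(1,2) xy, unfolded inner_keys_def])
  then show ?thesis
    by (simp add: reflect_chain_reflect reflected_charge_split[OF assms(1,2) xy])
      (simp add: reflected_charge_def)
qed

lemma reflected_charge_lipschitz:
  assumes "set ks \<subseteq> K" "x \<in> K" "y \<in> K" "inside x y"
  shows "\<bar>reflected_charge C ks y - reflected_charge C ks x\<bar> \<le> key_len y - key_len x"
  using outer_reflections_dist_le[OF assms] unfolding reflected_charge_split[OF assms(1,2,4)]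
  by (simp add: reflected_charge_def reflect_chain_dist)

lemma reflected_charge_bounded:
  assumes "set ks \<subseteq> K" "k \<in> K"
  shows "\<bar>reflected_charge C ks k\<bar> \<le> key_len k"
proof (cases "inner_keys ks k" rule: rev_cases)
  case Nil
  then show ?thesis using bounded assms(2) by (simp add: reflected_charge_def)
next
  case (snoc S t)
  have S: "set (inner_keys ks k) \<subseteq> K" "sorted (inner_keys ks k)"
    "\<forall>s\<in>set (inner_keys ks k). strictly_inside s k"
    using inner_keys_subset[OF assms(1)] by (auto simp: inner_keys_def)
  then have "t \<in> K" "strictly_inside t k" "\<forall>s\<in>set (inner_keys ks k). inside t s"
    using snoc by (auto simp: sorted_append inside_iff_le)
  then have "\<bar>reflected_charge C ks k - C t\<bar> \<le> key_len k - key_len t"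
    unfolding reflected_charge_def using S assms(2)
    by (intro reflect_chain_dist_le) (auto simp: strictly_inside_def)
  with bounded[OF \<open>t \<in> K\<close>] show ?thesis by simp
qed

lemma reflected_charge_snoc_dist:
  assumes "set ks \<subseteq> K" "x \<in> K" "y \<in> K"
  shows "\<bar>reflected_charge C (ks @ [x]) y - reflected_charge C ks x\<bar> \<le> \<bar>key_len x - key_len y\<bar>"
proof (cases "strictly_inside x y")
  case True
  then show ?thesis
    using reflected_charge_lipschitz[OF assms] reflected_charge_snoc_inside[OF assms(1,2) True]
    by (simp add: strictly_inside_def abs_minus_commute)
next
  case False
  then have "inside y x" using chain[OF assms(2,3)] by (auto simp: strictly_inside_def)
  then show ?thesis
    using reflected_charge_lipschitz[OF assms(1,3,2)] reflected_charge_snoc_outside[OF False]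
    by (simp add: abs_minus_commute)
qed

definition charge_invariant :: "vseg list \<Rightarrow> bool" where
  "charge_invariant F \<longleftrightarrow> (\<forall>e\<in>set F. valid_vseg e \<and> key e \<in> K) \<and>
    (\<forall>xs e ys. F = xs @ e # ys \<longrightarrow>
      normalized_charge xs e = reflected_charge C (map key xs) (key e))"

lemma charge_invariant_NV_pair:
  assumes "charge_invariant (xs @ a # b # ys)"
  shows "NV_pair a b"
proof -
  let ?ks = "map key xs"
  have valid: "valid_vseg a" "valid_vseg b" and keys: "key a \<in> K" "key b \<in> K" "set ?ks \<subseteq> K"
    using assms by (auto simp: charge_invariant_def)
  have charges: "\<And>xs' e ys'. xs @ a # b # ys = xs' @ e # ys' \<Longrightarrow>
      normalized_charge xs' e = reflected_charge C (map key xs') (key e)"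
    using assms by (simp add: charge_invariant_def)
  have a: "normalized_charge xs a = reflected_charge C ?ks (key a)"
    using charges[of xs a "b # ys"] by simp
  have b: "normalized_charge (xs @ [a]) b = reflected_charge C (?ks @ [key a]) (key b)"
    using charges[of "xs @ [a]" b ys] by simp
  have "nested a b"
    using chain[OF keys(1,2)] Supp_subset_iff_inside valid by (auto simp: nested_def)
  moreover have "extended a"
    using reflected_charge_bounded[OF keys(3,1)] a abs_normalized_charge[of xs a]
    by (simp add: extended_iff_charge valid)
  moreover have "extended b"
    using reflected_charge_bounded[of "?ks @ [key a]" "key b"] keys b
      abs_normalized_charge[of "xs @ [a]" b]
    by (simp add: extended_iff_charge valid)
  moreover have "\<bar>charge b - parity_sign a * charge a\<bar> \<le> \<bar>seglen a - seglen b\<bar>"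
    using reflected_charge_snoc_dist[OF keys(3,1,2)] normalized_charge_snoc_diff[of xs a b]
    by (simp add: a b)
  ultimately show ?thesis using NV_pair_iff_charge valid by blast
qed

lemma charge_invariant_NVt: "charge_invariant F \<Longrightarrow> NVt F"
  unfolding NVt_def
proof (intro allI impI)
  fix i assume "charge_invariant F" "Suc i < length F"
  moreover have "F = take i F @ F ! i # F ! Suc i # drop (Suc (Suc i)) F"
    using \<open>Suc i < length F\<close> by (simp add: Cons_nth_drop_Suc)
  ultimately show "NV_pair (F ! i) (F ! Suc i)"
    by (metis charge_invariant_NV_pair)
qed

lemma row_exchange_reflected_charges:
  assumes keys: "set (map key xs) \<subseteq> K" "key a \<in> K" "key b \<in> K"
    and valid: "valid_vseg a" "valid_vseg b"
    and a: "normalized_charge xs a = reflected_charge C (map key xs) (key a)"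
    and b: "normalized_charge (xs @ [a]) b = reflected_charge C (map key xs @ [key a]) (key b)"
  shows "normalized_charge xs (fst (row_exchange a b)) = reflected_charge C (map key xs) (key b)"
    and "normalized_charge (xs @ [fst (row_exchange a b)]) (snd (row_exchange a b)) =
      reflected_charge C (map key xs @ [key b]) (key a)"
proof -
  let ?ks = "map key xs" and ?b' = "fst (row_exchange a b)" and ?a' = "snd (row_exchange a b)"
  consider (subset) "Supp a \<subseteq> Supp b"
    | (supset) "\<not> Supp a \<subseteq> Supp b" "strictly_inside (key b) (key a)"
    using chain[OF keys(2,3)] unfolding Supp_subset_iff_inside[OF valid(1)] strictly_inside_def
    by (metis inside_refl)
  then have "normalized_charge xs ?b' = reflected_charge C ?ks (key b) \<and>
    normalized_charge (xs @ [?b']) ?a' = reflected_charge C (?ks @ [key b]) (key a)"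
  proof cases
    case subset
    then have "inside (key a) (key b)" using Supp_subset_iff_inside[OF valid(1)] by simp
    then have "\<not> strictly_inside (key b) (key a)" using strictly_inside_asym by blast
    moreover have "2 * reflected_charge C ?ks (key a) - reflected_charge C (?ks @ [key a]) (key b)
        = reflected_charge C ?ks (key b)"
    proof (cases "key a = key b")
      case True
      then show ?thesis by (simp add: reflected_charge_snoc_outside strictly_inside_def)
    next
      case False
      with \<open>inside (key a) (key b)\<close> show ?thesis
        using reflected_charge_snoc_inside[OF keys(1,2)] by (simp add: strictly_inside_def)
    qed
    ultimately show ?thesis
      using normalized_charge_row_exchange_subset[OF valid subset] a b
      by (simp add: reflected_charge_snoc_outside)
  next
    case supset
    then have "\<not> strictly_inside (key a) (key b)"
      using strictly_inside_asym by (auto simp: strictly_inside_def)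
    then show ?thesis
      using normalized_charge_row_exchange_supset[OF valid supset(1)] a b
        reflected_charge_snoc_inside[OF keys(1,3) supset(2)]
      by (simp add: reflected_charge_snoc_outside)
  qed
  then show "normalized_charge xs ?b' = reflected_charge C ?ks (key b)"
    and "normalized_charge (xs @ [?b']) ?a' = reflected_charge C (?ks @ [key b]) (key a)"
    by simp_all
qed

lemma charge_invariant_row_exchange:
  assumes inv: "charge_invariant (xs @ a # b # ys)"
  shows "charge_invariant (xs @ fst (row_exchange a b) # snd (row_exchange a b) # ys)"
proof -
  define b' a' where "b' = fst (row_exchange a b)" and "a' = snd (row_exchange a b)"
  have valid: "valid_vseg a" "valid_vseg b"
    and keys: "key a \<in> K" "key b \<in> K" "set (map key xs) \<subseteq> K"
    using inv by (auto simp: charge_invariant_def)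
  have swapped: "key b' = key b" "key a' = key a"
    "parity_sign b' = parity_sign b" "parity_sign a' = parity_sign a"
    unfolding a'_def b'_def by (simp_all add: key_row_exchange parity_sign_row_exchange)
  have charges: "\<And>xs' e ys'. xs @ a # b # ys = xs' @ e # ys' \<Longrightarrow>
      normalized_charge xs' e = reflected_charge C (map key xs') (key e)"
    using inv by (simp add: charge_invariant_def)
  have new: "normalized_charge xs b' = reflected_charge C (map key xs) (key b)"
    "normalized_charge (xs @ [b']) a' = reflected_charge C (map key xs @ [key b]) (key a)"
    using row_exchange_reflected_charges[OF keys(3,1,2) valid]
      charges[of xs a "b # ys"] charges[of "xs @ [a]" b ys]
    by (simp_all add: a'_def b'_def)
  have "normalized_charge xs' e = reflected_charge C (map key xs') (key e)"
    if split: "xs @ b' # a' # ys = xs' @ e # ys'" for xs' e ys'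
  proof -
    consider (before) zs where "xs = xs' @ e # zs"
      | (b') "xs' = xs" "e = b'" | (a') "xs' = xs @ [b']" "e = a'"
      | (after) zs where "xs' = xs @ b' # a' # zs" "ys = zs @ e # ys'"
      using split by (auto simp: append_eq_append_conv2 Cons_eq_append_conv append_eq_Cons_conv)
    then show ?thesis
    proof cases
      case before
      then show ?thesis using charges split by (metis append.assoc append_Cons same_append_eq)
    next
      case after
      have "normalized_charge (xs @ a # b # zs) e =
          reflected_charge C (map key (xs @ a # b # zs)) (key e)"
        using charges after by simp
      moreover have "sign_prod (xs @ a # b # zs) = sign_prod xs'"
        "mset (map key (xs @ a # b # zs)) = mset (map key xs')"
        using after swapped by simp_all
      ultimately show ?thesis
        by (metis normalized_charge_def reflected_charge_def inner_keys_perm)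
    qed (use new swapped in simp_all)
  qed
  moreover have "\<forall>e\<in>set (xs @ b' # a' # ys). valid_vseg e \<and> key e \<in> K"
    using inv valid_row_exchange[OF valid] swapped by (auto simp: charge_invariant_def a'_def b'_def)
  ultimately show ?thesis
    unfolding charge_invariant_def a'_def b'_def by blast
qed

lemma charge_invariant_rtranclp:
  "R_step\<^sup>*\<^sup>* F F' \<Longrightarrow> charge_invariant F \<Longrightarrow> charge_invariant F'"
  by (induction rule: rtranclp_induct)
    (auto elim!: R_step_split intro: charge_invariant_row_exchange)

end

subsection \<open>Sequences with decreasing supports\<close>

lemma NV_pair_extended: "NV_pair a b \<Longrightarrow> extended a \<and> extended b"
  by (simp add: NV_pair_def Let_def)

lemma NVt_extended:
  assumes "NVt E" "2 \<le> length E" "e \<in> set E"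
  shows "extended e"
proof -
  obtain i where i: "i < length E" "e = E ! i" using assms(3) by (auto simp: in_set_conv_nth)
  show ?thesis
  proof (cases "Suc i < length E")
    case True
    then show ?thesis using assms(1) i NV_pair_extended by (auto simp: NVt_def)
  next
    case False
    then have "Suc (i - 1) < length E" "Suc (i - 1) = i" using i(1) assms(2) by auto
    then show ?thesis using assms(1) i NV_pair_extended unfolding NVt_def by metis
  qed
qed

lemma seglen_mono: "valid_vseg a \<Longrightarrow> Supp a \<subseteq> Supp b \<Longrightarrow> seglen a \<le> seglen b"
  by (metis Supp_subset_iff_inside key_len_key key_len_mono)

lemma decreasing_Supp:
  assumes "\<forall>i. Suc i < length E \<longrightarrow> Supp (E ! Suc i) \<subseteq> Supp (E ! i)" "i \<le> j" "j < length E"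
  shows "Supp (E ! j) \<subseteq> Supp (E ! i)"
  using assms(2,3)
proof (induction rule: dec_induct)
  case (step n)
  then show ?case using assms(1) by (meson Suc_lessD order.trans)
qed simp

lemma decreasing_normalized_charge_dist:
  assumes valid: "\<forall>e\<in>set E. valid_vseg e"
    and decr: "\<forall>i. Suc i < length E \<longrightarrow> Supp (E ! Suc i) \<subseteq> Supp (E ! i)"
    and NVt: "NVt E" and "i \<le> j" "j < length E"
  shows "\<bar>normalized_charge (take i E) (E ! i) - normalized_charge (take j E) (E ! j)\<bar>
    \<le> seglen (E ! i) - seglen (E ! j)"
  using assms(4,5)
proof (induction rule: dec_induct)
  case (step n)
  then have n: "Suc n < length E" by simp
  then have valid_n: "valid_vseg (E ! n)" "valid_vseg (E ! Suc n)"
    and sub: "Supp (E ! Suc n) \<subseteq> Supp (E ! n)"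
    using valid decr by auto
  have "\<bar>normalized_charge (take (Suc n) E) (E ! Suc n) - normalized_charge (take n E) (E ! n)\<bar>
      = \<bar>charge (E ! Suc n) - parity_sign (E ! n) * charge (E ! n)\<bar>"
    using n by (simp add: take_Suc_conv_app_nth normalized_charge_snoc_diff)
  also have "\<dots> \<le> \<bar>seglen (E ! n) - seglen (E ! Suc n)\<bar>"
    using NVt n NV_pair_iff_charge[OF valid_n] sub by (auto simp: NVt_def nested_def)
  also have "\<dots> = seglen (E ! n) - seglen (E ! Suc n)"
    using seglen_mono[OF valid_n(2) sub] by simp
  finally show ?case using step.IH n by simp
qed simp

lemma decreasing_keys_inside:
  assumes valid: "\<forall>e\<in>set E. valid_vseg e"
    and decr: "\<forall>i. Suc i < length E \<longrightarrow> Supp (E ! Suc i) \<subseteq> Supp (E ! i)"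
    and "i \<le> j" "j < length E"
  shows "inside (key (E ! j)) (key (E ! i))"
  using decreasing_Supp[OF decr assms(3,4)] Supp_subset_iff_inside valid nth_mem[OF assms(4)]
  by blast

lemma decreasing_normalized_charge_by_key:
  assumes valid: "\<forall>e\<in>set E. valid_vseg e"
    and decr: "\<forall>i. Suc i < length E \<longrightarrow> Supp (E ! Suc i) \<subseteq> Supp (E ! i)"
    and NVt: "NVt E"
  obtains C where "\<And>i. i < length E \<Longrightarrow> C (key (E ! i)) = normalized_charge (take i E) (E ! i)"
proof -
  define w where "w i = normalized_charge (take i E) (E ! i)" for i
  have same_key: "w i = w j" if "i \<le> j" "j < length E" "key (E ! i) = key (E ! j)" for i j
  proof -
    have "seglen (E ! i) = seglen (E ! j)" using that(3) key_len_key by metis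
    then show ?thesis using decreasing_normalized_charge_dist[OF valid decr NVt that(1,2)]
      by (simp add: w_def)
  qed
  define C where "C k = w (SOME i. i < length E \<and> key (E ! i) = k)" for k
  have "C (key (E ! i)) = w i" if i: "i < length E" for i
  proof -
    define j where "j = (SOME j. j < length E \<and> key (E ! j) = key (E ! i))"
    have "\<exists>j. j < length E \<and> key (E ! j) = key (E ! i)" using i by blast
    then have j: "j < length E \<and> key (E ! j) = key (E ! i)"
      unfolding j_def by (rule someI_ex)
    have "w j = w i"
    proof (cases "i \<le> j")
      case True
      then show ?thesis using same_key[of i j] j by simp
    next
      case False
      then show ?thesis using same_key[of j i] i j by simp
    qed
    then show ?thesis by (simp add: C_def j_def[symmetric])
  qed
  then show ?thesis by (intro that) (simp add: w_def)
qed

lemma decreasing_key_chain: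
  assumes valid: "\<forall>e\<in>set E. valid_vseg e"
    and decr: "\<forall>i. Suc i < length E \<longrightarrow> Supp (E ! Suc i) \<subseteq> Supp (E ! i)"
    and NVt: "NVt E" and len: "2 \<le> length E"
    and C: "\<And>i. i < length E \<Longrightarrow> C (key (E ! i)) = normalized_charge (take i E) (E ! i)"
  shows "key_chain (key ` set E) C"
proof
  fix k k' assume "k \<in> key ` set E" "k' \<in> key ` set E"
  then obtain i j where ij: "i < length E" "j < length E" "k = key (E ! i)" "k' = key (E ! j)"
    by (auto simp: in_set_conv_nth)
  note inside = decreasing_keys_inside[OF valid decr]
  show "inside k k' \<or> inside k' k"
    using inside[of i j] inside[of j i] ij by (cases "i \<le> j") auto
  show "\<bar>C k - C k'\<bar> \<le> key_len k - key_len k'" if "inside k' k"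
  proof (cases "i \<le> j")
    case True
    then show ?thesis using decreasing_normalized_charge_dist[OF valid decr NVt] ij C by simp
  next
    case False
    then have "k = k'" using inside[of j i] ij that inside_antisym by simp
    then show ?thesis by simp
  qed
next
  fix k assume "k \<in> key ` set E"
  then obtain i where i: "i < length E" "k = key (E ! i)" by (auto simp: in_set_conv_nth)
  then have "extended (E ! i)" using NVt_extended[OF NVt len] by simp
  then show "\<bar>C k\<bar> \<le> key_len k"
    using i valid C by (simp add: abs_normalized_charge extended_iff_charge)
qed

text \<open>Initially no entry lies strictly inside an earlier one, so the invariant only asks the
  normalized charge to depend on the support alone.\<close>

lemma (in key_chain) decreasing_charge_invariant:
  assumes valid: "\<forall>e\<in>set E. valid_vseg e"
    and decr: "\<forall>i. Suc i < length E \<longrightarrow> Supp (E ! Suc i) \<subseteq> Supp (E ! i)"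
    and keys: "key ` set E \<subseteq> K"
    and C: "\<And>i. i < length E \<Longrightarrow> C (key (E ! i)) = normalized_charge (take i E) (E ! i)"
  shows "charge_invariant E"
proof -
  have "normalized_charge xs e = reflected_charge C (map key xs) (key e)"
    if E: "E = xs @ e # ys" for xs e ys
  proof -
    let ?i = "length xs"
    have i: "?i < length E" "E ! ?i = e" "take ?i E = xs" using E by auto
    have "\<not> strictly_inside k (key e)" if "k \<in> set (map key xs)" for k
    proof -
      obtain j where "j < ?i" "k = key (E ! j)" using \<open>k \<in> set (map key xs)\<close> E
        by (auto simp: in_set_conv_nth nth_append)
      then have "inside (key e) k" using decreasing_keys_inside[OF valid decr, of j ?i] i by simp
      then show ?thesis using strictly_inside_asym by blast
    qed
    then have "inner_keys (map key xs) (key e) = []"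
      by (auto simp: inner_keys_def filter_empty_conv)
    then show ?thesis using C[of ?i] i by (simp add: reflected_charge_def)
  qed
  with valid keys show ?thesis by (auto simp: charge_invariant_def)
qed

theorem theorem4p15:
  fixes E :: "vseg list"
  assumes "\<forall>e\<in>set E. valid_vseg e"
    and "admissible E"
    and "\<forall>i. Suc i < length E \<longrightarrow> Supp (E!Suc i) \<subseteq> Supp (E!i)"
  shows "NV E \<longleftrightarrow> NVt E"
proof
  assume "NV E"
  then show "NVt E" by (simp add: NV_def eqclass_def)
next
  assume NVt: "NVt E"
  show "NV E"
    unfolding NV_def eqclass_def
  proof (intro ballI, unfold mem_Collect_eq)
    fix E' assume steps: "R_step\<^sup>*\<^sup>* E E'"
    show "NVt E'"
    proof (cases "2 \<le> length E")
      case True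
      obtain C where C: "\<And>i. i < length E \<Longrightarrow>
          C (key (E ! i)) = normalized_charge (take i E) (E ! i)"
        using decreasing_normalized_charge_by_key[OF assms(1,3) NVt] by blast
      interpret key_chain "key ` set E" C
        using decreasing_key_chain[OF assms(1,3) NVt True C] .
      have "charge_invariant E"
        using decreasing_charge_invariant[OF assms(1,3) _ C] by blast
      then show ?thesis using charge_invariant_rtranclp[OF steps] charge_invariant_NVt by blast
    next
      case False
      then show ?thesis using rtranclp_R_step_length[OF steps] by (simp add: NVt_def)
    qed
  qed
qed

end
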